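(* Under the hypotheses of Theorem 2 (factorized true joint propensity $p(t,z\mid\mathbf{x})=\phi(z;\mathbf{x}_z)e(t;\mathbf{x}_t)$, estimates $e_\eta,\phi_\eta$ with odds ratios bounded by $\Gamma_t\ge1$ and $\Gamma_z\ge1$ as stated there, weights $w_\eta(t,z,\mathbf{x})=1/(\phi_\eta(z;\mathbf{x}_z)e_\eta(t;\mathbf{x}_t))$ and one-to-one $\Phi$), the Kullback–Leibler divergence satisfies $$D_{KL}\big(p(\mathbf{x})p(t,z)\,\big\|\,q_\eta(\mathbf{x}\mid t,z)p(t,z)\big)=D_{KL}\big(p_\Phi(r)p(t,z)\,\big\|\,q_{\Phi,\eta}(r\mid t,z)p(t,z)\big)\le 2(\log\Gamma_t+\log\Gamma_z),$$ and consequently the total variation distance satisfies $\delta\big(p_\Phi(r)p(t,z),\,q_{\Phi,\eta}(r\mid t,z)p(t,z)\big)\le\sqrt{\log\Gamma_t+\log\Gamma_z}$.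
   Context: Setting: combined features $\mathbf{x}\in\mathcal{X}'=\mathcal{X}\times\mathcal{X}^{|\mathcal{N}|}$, treatment $t\in\{0,1\}$, exposure $z\in[0,1]$ with joint distribution, marginals $p(\mathbf{x})$, $p(t,z)$, conditionals $p(\mathbf{x}\mid t,z)$, and $p(t,z\mid\mathbf{x})>0$. $\mathbf{x}_t,\mathbf{x}_z$ are sub-vectors of $\mathbf{x}$; $e(t;\mathbf{x}_t)=p(t\mid\mathbf{x}_t)$, $\phi(z;\mathbf{x}_z)=p(z\mid\mathbf{x}_z)$. Odds-ratio condition: $\Gamma_t^{-1}\le e_\eta(t;\mathbf{x}_t)/e(t;\mathbf{x}_t)\le\Gamma_t$ and $\Gamma_z^{-1}\le\phi_\eta(z;\mathbf{x}_z)/\phi(z;\mathbf{x}_z)\le\Gamma_z$ for all arguments. $q_\eta(\mathbf{x}\mid t,z)=w_\eta(t,z,\mathbf{x})p(\mathbf{x}\mid t,z)/\int w_\eta(t,z,\mathbf{x}')p(\mathbf{x}'\mid t,z)d\mathbf{x}'$. $p_\Phi(r)$, $q_{\Phi,\eta}(r\mid t,z)$ are the push-forwards under $\Phi$ of $p(\mathbf{x})$, $q_\eta(\mathbf{x}\mid t,z)$. Total variation distance: $\delta(P,Q)=\frac12\sup_{\|m\|_\infty\le1}\int m\,(dP-dQ)$. *)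

theory Defs
  imports "HOL-Probability.Probability"
begin

text \<open>Base measure for (t,z): t ranges over {0,1} (encoded as bool, True = treated),
  z over [0,1]; counting measure on t times Lebesgue measure on [0,1].\<close>
definition TZ :: "(bool \<times> real) measure" where
  "TZ = count_space UNIV \<Otimes>\<^sub>M restrict_space lborel {0..1}"

definition marg_x :: "'x measure \<Rightarrow> ('x \<times> (bool \<times> real) \<Rightarrow> real) \<Rightarrow> 'x \<Rightarrow> real" where
  "marg_x MX f x = enn2real (\<integral>\<^sup>+ tz. ennreal (f (x, tz)) \<partial>TZ)"

definition marg_tz :: "'x measure \<Rightarrow> ('x \<times> (bool \<times> real) \<Rightarrow> real) \<Rightarrow> bool \<times> real \<Rightarrow> real" where
  "marg_tz MX f tz = enn2real (\<integral>\<^sup>+ x. ennreal (f (x, tz)) \<partial>MX)"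

definition cond_x :: "'x measure \<Rightarrow> ('x \<times> (bool \<times> real) \<Rightarrow> real) \<Rightarrow> bool \<times> real \<Rightarrow> 'x \<Rightarrow> real" where
  "cond_x MX f tz x = f (x, tz) / marg_tz MX f tz"

definition post_tz :: "'x measure \<Rightarrow> ('x \<times> (bool \<times> real) \<Rightarrow> real) \<Rightarrow> 'x \<Rightarrow> bool \<times> real \<Rightarrow> real" where
  "post_tz MX f x tz = f (x, tz) / marg_x MX f x"

definition q_eta :: "'x measure \<Rightarrow> ('x \<times> (bool \<times> real) \<Rightarrow> real) \<Rightarrow> (bool \<times> real \<Rightarrow> 'x \<Rightarrow> real)
    \<Rightarrow> bool \<times> real \<Rightarrow> 'x \<Rightarrow> real" where
  "q_eta MX f w tz x = w tz x * cond_x MX f tz x /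
      enn2real (\<integral>\<^sup>+ x'. ennreal (w tz x' * cond_x MX f tz x') \<partial>MX)"

definition P_meas :: "'x measure \<Rightarrow> ('x \<times> (bool \<times> real) \<Rightarrow> real) \<Rightarrow> ('x \<times> (bool \<times> real)) measure" where
  "P_meas MX f = density MX (\<lambda>x. ennreal (marg_x MX f x)) \<Otimes>\<^sub>M density TZ (\<lambda>tz. ennreal (marg_tz MX f tz))"

definition Q_meas :: "'x measure \<Rightarrow> ('x \<times> (bool \<times> real) \<Rightarrow> real) \<Rightarrow> (bool \<times> real \<Rightarrow> 'x \<Rightarrow> real)
    \<Rightarrow> ('x \<times> (bool \<times> real)) measure" where
  "Q_meas MX f w = density (MX \<Otimes>\<^sub>M TZ)
      (\<lambda>(x, tz). ennreal (q_eta MX f w tz x * marg_tz MX f tz))"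

definition P_Phi :: "'x measure \<Rightarrow> 'r measure \<Rightarrow> ('x \<Rightarrow> 'r) \<Rightarrow> ('x \<times> (bool \<times> real) \<Rightarrow> real)
    \<Rightarrow> ('r \<times> (bool \<times> real)) measure" where
  "P_Phi MX MR Phi f = distr (density MX (\<lambda>x. ennreal (marg_x MX f x))) MR Phi
      \<Otimes>\<^sub>M density TZ (\<lambda>tz. ennreal (marg_tz MX f tz))"

definition Q_Phi :: "'x measure \<Rightarrow> 'r measure \<Rightarrow> ('x \<Rightarrow> 'r) \<Rightarrow> ('x \<times> (bool \<times> real) \<Rightarrow> real)
    \<Rightarrow> (bool \<times> real \<Rightarrow> 'x \<Rightarrow> real) \<Rightarrow> ('r \<times> (bool \<times> real)) measure" where
  "Q_Phi MX MR Phi f w = distr (Q_meas MX f w) (MR \<Otimes>\<^sub>M TZ) (\<lambda>(x, tz). (Phi x, tz))"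

text \<open>Kullback--Leibler divergence D_KL(P || Q) with natural logarithm
  (the library's KL_divergence b M N is D(N || M)).\<close>
definition KL :: "'a measure \<Rightarrow> 'a measure \<Rightarrow> real" where
  "KL P Q = KL_divergence (exp 1) Q P"

definition tv_dist :: "'a measure \<Rightarrow> 'a measure \<Rightarrow> real" where
  "tv_dist P Q = 1/2 * (SUP m \<in> {m \<in> borel_measurable P. \<forall>y \<in> space P. \<bar>m y\<bar> \<le> 1}.
      (\<integral>y. m y \<partial>P) - (\<integral>y. m y \<partial>Q))"

end

theory Submission
  imports Defs
begin

(*
  With the true propensity factorised as \<phi> e, the joint density is f(x, t, z) = \<phi> e p(x), and the
  odds-ratio bounds put the weight w = 1 / (\<phi>\<eta> e\<eta>) within a factor \<Gamma> = \<Gamma>t \<Gamma>z of 1 / (\<phi> e).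
  Hence w f lies between p(x) / \<Gamma> and \<Gamma> p(x), so its normalising constant over x lies in
  [1/\<Gamma>, \<Gamma>], and the density q_eta(x | t, z) p(t, z) is within a factor \<Gamma>\<^sup>2 of p(x) p(t, z)
  almost everywhere. A likelihood ratio bounded by \<Gamma>\<^sup>2 gives KL \<le> ln \<Gamma>\<^sup>2 directly, and gives the
  total variation bound (\<Gamma>\<^sup>2 - 1) / (\<Gamma>\<^sup>2 + 1) \<le> sqrt (ln \<Gamma>) without passing through Pinsker's
  inequality. Pushing both measures forward along the bimeasurable bijection (x, t, z) \<mapsto> (\<Phi> x, t, z)
  preserves the Radon-Nikodym derivative, hence the KL divergence.
*)

section \<open>Elementary inequalities\<close>

lemma inverse_ratio_bounds:
  fixes a a' G :: real
  assumes "0 \<le> a" "1 \<le> G" "inverse G \<le> a' / a" "a' / a \<le> G"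
  shows "0 < a'" "inverse G \<le> a / a'" "a / a' \<le> G"
proof -
  have "0 < a' / a" using assms by (smt (verit) inverse_positive_iff_positive)
  then have "0 < a" "0 < a'" using assms(1) by (auto simp: zero_less_divide_iff)
  then show "0 < a'" by simp
  have flip: "a / a' = inverse (a' / a)" by simp
  show "inverse G \<le> a / a'" unfolding flip using assms(4) \<open>0 < a' / a\<close> by (rule le_imp_inverse_le)
  have "inverse (a' / a) \<le> inverse (inverse G)"
    using assms(2,3) by (intro le_imp_inverse_le) auto
  then show "a / a' \<le> G" unfolding flip by simp
qed

lemma inverse_weight_bounds:
  fixes a a' b b' G H r :: real
  assumes "0 \<le> a" "1 \<le> G" "inverse G \<le> a' / a" "a' / a \<le> G"
    and "0 \<le> b" "1 \<le> H" "inverse H \<le> b' / b" "b' / b \<le> H" and r: "0 \<le> r"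
  shows "0 < a' * b'" "r / (G * H) \<le> 1 / (a' * b') * (a * b * r)" "1 / (a' * b') * (a * b * r) \<le> G * H * r"
proof -
  note ra = inverse_ratio_bounds[OF assms(1-4)] and rb = inverse_ratio_bounds[OF assms(5-8)]
  then show "0 < a' * b'" by simp
  have "0 < inverse G" "0 < inverse H" using assms(2,6) by auto
  then have nonneg: "0 \<le> a / a'" "0 \<le> b / b'" using ra(2) rb(2) by linarith+
  have split: "1 / (a' * b') * (a * b * r) = (a / a') * (b / b') * r" by simp
  have "inverse G * inverse H \<le> (a / a') * (b / b')"
    using ra rb nonneg by (intro mult_mono) auto
  then have "inverse (G * H) * r \<le> (a / a') * (b / b') * r"
    unfolding inverse_mult_distrib using r by (rule mult_right_mono)
  then show "r / (G * H) \<le> 1 / (a' * b') * (a * b * r)"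
    unfolding split by (simp add: divide_inverse mult.commute)
  have "(a / a') * (b / b') \<le> G * H"
    using ra rb nonneg assms(2) by (intro mult_mono) auto
  then show "1 / (a' * b') * (a * b * r) \<le> G * H * r"
    unfolding split using r by (rule mult_right_mono)
qed

text \<open>Integrated against two probability densities, the right-hand side gives \<open>2 (b - 1) / (b + 1)\<close>.\<close>

lemma abs_diff_le_of_mutual_ratio_bound:
  fixes p q b :: real
  assumes "p \<le> b * q" "q \<le> b * p" "1 \<le> b"
  shows "\<bar>p - q\<bar> \<le> 2 * (b * q - p) / (b + 1) - (q - p)"
proof (cases "q \<le> p")
  case True
  have "0 \<le> 2 * (b * q - p) / (b + 1)" using assms by simp
  then show ?thesis using True by simp
next
  case False
  have "2 * (q - p) * (b + 1) \<le> 2 * (b * q - p)"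
    using assms(2) by (simp add: algebra_simps)
  then have "2 * (q - p) \<le> 2 * (b * q - p) / (b + 1)"
    using assms(3) by (simp add: pos_le_divide_eq)
  then show ?thesis using False by simp
qed

lemma sq_minus_one_div_sq_plus_one_le_sqrt_ln:
  fixes c :: real
  assumes c: "1 \<le> c"
  shows "(c^2 - 1) / (c^2 + 1) \<le> sqrt (ln c)"
proof (cases "1 \<le> ln c")
  case True
  have "0 < c^2 + 1" by (smt (verit) zero_le_power2)
  then have "(c^2 - 1) / (c^2 + 1) \<le> 1" by (simp add: divide_le_eq)
  also have "1 \<le> sqrt (ln c)" using True by simp
  finally show ?thesis .
next
  case False
  \<comment> \<open>Then \<open>c < e \<le> 3\<close>, and \<open>1 - 1/c \<le> ln c\<close> reduces the claim to a polynomial inequality on \<open>[1, 3]\<close>.\<close>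
  have "c < exp 1" using False c by (metis exp_ln less_le_trans ln_less_cancel_iff not_le zero_less_one exp_gt_zero ln_exp)
  then have c3: "c \<le> 3" using exp_le by simp
  have ln_lower: "1 - 1 / c \<le> ln c"
    using ln_le_minus_one[of "1 / c"] c by (simp add: ln_div)
  have poly: "c * (c - 1) * (c + 1)^2 \<le> (c^2 + 1)^2"
  proof -
    define d where "d = c - 1"
    have d: "0 \<le> d" "d \<le> 2" using c c3 by (auto simp: d_def)
    have "d^3 \<le> 4 * d"
      using mult_left_mono[OF mult_mono[OF d(2) d(2)], of d] d by (simp add: power3_eq_cube)
    moreover have "(c^2 + 1)^2 - c * (c - 1) * (c + 1)^2 = 4 + 4 * d - d^3"
      by (simp add: d_def power2_eq_square power3_eq_cube algebra_simps)
    ultimately show ?thesis using d by simp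
  qed
  have "((c^2 - 1) / (c^2 + 1))^2 \<le> 1 - 1 / c"
  proof -
    have pos: "0 < c^2 + 1" by (smt (verit) zero_le_power2)
    have "(c^2 - 1)^2 * c = (c - 1) * (c * (c - 1) * (c + 1)^2)"
      by (simp add: power2_eq_square algebra_simps)
    also have "\<dots> \<le> (c - 1) * (c^2 + 1)^2" using poly c by (intro mult_left_mono) auto
    finally have "(c^2 - 1)^2 * c \<le> (c - 1) * (c^2 + 1)^2" .
    then show ?thesis using c pos by (simp add: power_divide divide_le_eq le_divide_eq field_simps)
  qed
  then show ?thesis using ln_lower by (intro real_le_rsqrt) linarith
qed

section \<open>Densities with bounded likelihood ratio\<close>

definition ratio_bounded_densities :: "'a measure \<Rightarrow> real \<Rightarrow> ('a \<Rightarrow> real) \<Rightarrow> ('a \<Rightarrow> real) \<Rightarrow> bool" where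
  "ratio_bounded_densities M b p q \<longleftrightarrow>
    p \<in> borel_measurable M \<and> q \<in> borel_measurable M \<and> (\<forall>x\<in>space M. 0 \<le> p x \<and> 0 \<le> q x) \<and>
    (\<integral>\<^sup>+x. ennreal (p x) \<partial>M) = 1 \<and> (\<integral>\<^sup>+x. ennreal (q x) \<partial>M) = 1 \<and>
    (AE x in M. p x \<le> b * q x \<and> q x \<le> b * p x)"

lemma prob_space_density_of_nn_integral_eq_1:
  assumes "f \<in> borel_measurable M" "(\<integral>\<^sup>+x. f x \<partial>M) = 1"
  shows "prob_space (density M f)"
proof (rule prob_spaceI)
  have "emeasure (density M f) (space M) = (\<integral>\<^sup>+x. f x \<partial>M)"
    using assms(1) by (simp add: emeasure_density cong: nn_integral_cong)
  then show "emeasure (density M f) (space (density M f)) = 1" using assms(2) by simp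
qed

lemma KL_density_eq_integral_ln:
  fixes p q :: "'a \<Rightarrow> real"
  assumes [measurable]: "p \<in> borel_measurable M" "q \<in> borel_measurable M"
    and p_nonneg: "\<And>x. x \<in> space M \<Longrightarrow> 0 \<le> p x" and q_nonneg: "\<And>x. x \<in> space M \<Longrightarrow> 0 \<le> q x"
    and p_prob: "(\<integral>\<^sup>+x. ennreal (p x) \<partial>M) = 1"
    and support: "AE x in M. q x = 0 \<longrightarrow> p x = 0"
  shows "KL (density M p) (density M q) = (\<integral>x. ln (p x / q x) \<partial>density M p)"
proof -
  let ?P = "density M p" and ?Q = "density M q" and ?h = "\<lambda>x. p x / q x"
  have "prob_space ?P"
    using p_prob by (intro prob_space_density_of_nn_integral_eq_1) auto
  then have "sigma_finite_measure ?P" by (rule prob_space_imp_sigma_finite)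
  have P_eq: "?P = density ?Q ?h"
  proof -
    have "AE x in M. ennreal (q x) * ennreal (?h x) = ennreal (p x)"
      using support AE_space
    proof eventually_elim
      case (elim x)
      then show ?case
        using q_nonneg[of x] by (cases "q x = 0") (simp_all flip: ennreal_mult')
    qed
    then have "density M (\<lambda>x. ennreal (q x) * ennreal (?h x)) = ?P"
      by (rule density_cong[rotated 2]) measurable
    then show ?thesis by (subst density_density_eq) auto
  qed
  have RN_Q: "AE x in ?Q. ennreal (?h x) = RN_deriv ?Q ?P x"
    by (rule RN_deriv_unique_sigma_finite[OF _ P_eq[symmetric] \<open>sigma_finite_measure ?P\<close>]) simp
  have ac: "absolutely_continuous ?Q ?P"
    by (subst P_eq) (rule absolutely_continuousI_density, simp)
  have RN: "AE x in ?P. ennreal (?h x) = RN_deriv ?Q ?P x"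
    by (rule absolutely_continuous_AE[OF _ ac RN_Q]) simp
  have "AE x in ?P. 0 \<le> ?h x"
    by (subst AE_density) (auto intro!: AE_I2 simp: p_nonneg q_nonneg)
  with RN have "AE x in ?P. entropy_density (exp 1) ?Q ?P x = ln (?h x)"
    by eventually_elim (drule sym, simp add: entropy_density_def log_def)
  then show ?thesis
    unfolding KL_def KL_divergence_def by (rule integral_cong_AE[rotated 2]) measurable
qed

lemma KL_density_le_ln:
  fixes p q :: "'a \<Rightarrow> real"
  assumes [measurable]: "p \<in> borel_measurable M" "q \<in> borel_measurable M"
    and p_nonneg: "\<And>x. x \<in> space M \<Longrightarrow> 0 \<le> p x" and q_nonneg: "\<And>x. x \<in> space M \<Longrightarrow> 0 \<le> q x"
    and p_prob: "(\<integral>\<^sup>+x. ennreal (p x) \<partial>M) = 1"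
    and ratio: "AE x in M. p x \<le> b * q x" and b: "1 \<le> b"
  shows "KL (density M p) (density M q) \<le> ln b"
proof -
  interpret P: prob_space "density M p"
    using p_prob by (intro prob_space_density_of_nn_integral_eq_1) auto
  have "AE x in M. q x = 0 \<longrightarrow> p x = 0"
    using ratio AE_space by eventually_elim (auto simp: p_nonneg intro: order_antisym)
  note KL_eq = KL_density_eq_integral_ln[OF assms(1-5) this]
  have "AE x in M. ln (p x / q x) \<le> ln b"
    using ratio AE_space
  proof eventually_elim
    case (elim x)
    then have "p x / q x \<le> b"
      using b q_nonneg[of x] by (cases "q x = 0") (auto simp: divide_le_eq mult.commute)
    moreover have "0 \<le> p x / q x" using elim p_nonneg q_nonneg by simp
    ultimately show ?case
      using b ln_mono[of "p x / q x" b] by (cases "p x = 0 \<or> q x = 0") (auto simp: less_le)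
  qed
  then have bound: "AE x in density M p. ln (p x / q x) \<le> ln b"
    by (auto simp: AE_density elim: eventually_mono)
  show ?thesis
  proof (cases "integrable (density M p) (\<lambda>x. ln (p x / q x))")
    case True
    then have "(\<integral>x. ln (p x / q x) \<partial>density M p) \<le> (\<integral>x. ln b \<partial>density M p)"
      using bound by (intro integral_mono_AE) auto
    then show ?thesis using KL_eq P.prob_space by simp
  next
    case False
    then show ?thesis using KL_eq b by (simp add: not_integrable_integral_eq)
  qed
qed

lemma absolutely_continuous_density_of_support:
  fixes p q :: "'a \<Rightarrow> real"
  assumes [measurable]: "p \<in> borel_measurable M" "q \<in> borel_measurable M"
    and q_nonneg: "\<And>x. x \<in> space M \<Longrightarrow> 0 \<le> q x"
    and support: "AE x in M. q x = 0 \<longrightarrow> p x = 0"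
  shows "absolutely_continuous (density M q) (density M p)"
  unfolding absolutely_continuous_def
proof
  fix A assume "A \<in> null_sets (density M q)"
  then have A: "A \<in> sets M" "AE x in M. x \<in> A \<longrightarrow> ennreal (q x) = 0"
    by (auto simp: null_sets_density_iff)
  have "AE x in M. x \<in> A \<longrightarrow> ennreal (p x) = 0"
    using A(2) support AE_space by eventually_elim (auto simp: q_nonneg ennreal_eq_0_iff antisym)
  then show "A \<in> null_sets (density M p)" using A by (auto simp: null_sets_density_iff)
qed

lemma KL_distr_of_inverse:
  assumes "sigma_finite_measure Q" and sets_eq: "sets P = sets Q"
    and ac: "absolutely_continuous Q P"
    and T: "T \<in> Q \<rightarrow>\<^sub>M N" and T': "T' \<in> N \<rightarrow>\<^sub>M Q"
    and inv: "\<forall>x\<in>space Q. T' (T x) = x"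
  shows "KL (distr P N T) (distr Q N T) = KL P Q"
proof -
  interpret Q: sigma_finite_measure Q by fact
  have TP: "T \<in> P \<rightarrow>\<^sub>M N" using T sets_eq by (simp cong: measurable_cong_sets)
  have ac_distr: "absolutely_continuous (distr Q N T) (distr P N T)"
    unfolding absolutely_continuous_def
  proof
    fix A assume "A \<in> null_sets (distr Q N T)"
    then have A: "A \<in> sets N" "T -` A \<inter> space Q \<in> null_sets Q"
      using T by (auto simp: null_sets_def emeasure_distr)
    then have "T -` A \<inter> space P \<in> null_sets P"
      using ac sets_eq_imp_space_eq[OF sets_eq] unfolding absolutely_continuous_def by auto
    then show "A \<in> null_sets (distr P N T)"
      using TP A(1) by (auto simp: null_sets_def emeasure_distr)
  qed
  have "AE x in Q. RN_deriv (distr Q N T) (distr P N T) (T x) = RN_deriv Q P x"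
    by (rule Q.RN_deriv_distr[OF T T' inv ac_distr sets_eq])
  then have RN: "AE x in P. RN_deriv (distr Q N T) (distr P N T) (T x) = RN_deriv Q P x"
    by (rule absolutely_continuous_AE[OF sets_eq ac])
  have [measurable]: "entropy_density (exp 1) (distr Q N T) (distr P N T) \<in> borel_measurable N"
    using measurable_entropy_density[of "exp 1" "distr Q N T" "distr P N T"]
    by (simp cong: measurable_cong_sets)
  have [measurable]: "entropy_density (exp 1) Q P \<in> borel_measurable P"
    using measurable_entropy_density[of "exp 1" Q P] sets_eq by (simp cong: measurable_cong_sets)
  have "KL (distr P N T) (distr Q N T) =
      (\<integral>x. entropy_density (exp 1) (distr Q N T) (distr P N T) (T x) \<partial>P)"
    unfolding KL_def KL_divergence_def by (rule integral_distr) (use TP in simp_all)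
  also have "\<dots> = (\<integral>x. entropy_density (exp 1) Q P x \<partial>P)"
  proof (rule integral_cong_AE)
    show "(\<lambda>x. entropy_density (exp 1) (distr Q N T) (distr P N T) (T x)) \<in> borel_measurable P"
      using TP by measurable
    show "AE x in P. entropy_density (exp 1) (distr Q N T) (distr P N T) (T x) = entropy_density (exp 1) Q P x"
      using RN by eventually_elim (simp add: entropy_density_def)
  qed measurable
  finally show ?thesis unfolding KL_def KL_divergence_def .
qed

lemma KL_distr_density_of_inverse:
  assumes dens: "ratio_bounded_densities M b p q"
    and T: "T \<in> M \<rightarrow>\<^sub>M N" and T': "T' \<in> N \<rightarrow>\<^sub>M M" and inv: "\<forall>x\<in>space M. T' (T x) = x"
  shows "KL (distr (density M p) N T) (distr (density M q) N T) = KL (density M p) (density M q)"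
proof (rule KL_distr_of_inverse)
  have [measurable]: "p \<in> borel_measurable M" "q \<in> borel_measurable M"
    and q_nonneg: "\<And>x. x \<in> space M \<Longrightarrow> 0 \<le> q x" and p_nonneg: "\<And>x. x \<in> space M \<Longrightarrow> 0 \<le> p x"
    and q_prob: "(\<integral>\<^sup>+x. ennreal (q x) \<partial>M) = 1" and ratio: "AE x in M. p x \<le> b * q x"
    using dens by (auto simp: ratio_bounded_densities_def)
  show "sigma_finite_measure (density M q)"
    using q_prob by (intro prob_space_imp_sigma_finite prob_space_density_of_nn_integral_eq_1) auto
  have support: "AE x in M. q x = 0 \<longrightarrow> p x = 0"
    using ratio AE_space by eventually_elim (auto simp: p_nonneg intro: antisym)
  show "absolutely_continuous (density M q) (density M p)"
    by (rule absolutely_continuous_density_of_support[OF _ _ q_nonneg support]) simp_all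
qed (use T T' inv in \<open>simp_all cong: measurable_cong_sets\<close>)

lemma integral_diff_density_le:
  fixes p q g :: "'a \<Rightarrow> real"
  assumes dens: "ratio_bounded_densities M b p q" and b: "1 \<le> b"
    and [measurable]: "g \<in> borel_measurable M" and g_bound: "\<And>x. x \<in> space M \<Longrightarrow> \<bar>g x\<bar> \<le> 1"
  shows "(\<integral>x. g x \<partial>density M p) - (\<integral>x. g x \<partial>density M q) \<le> 2 * (b - 1) / (b + 1)"
proof -
  note [measurable] = dens[unfolded ratio_bounded_densities_def, THEN conjunct1]
    dens[unfolded ratio_bounded_densities_def, THEN conjunct2, THEN conjunct1]
  have p_nonneg: "\<And>x. x \<in> space M \<Longrightarrow> 0 \<le> p x" and q_nonneg: "\<And>x. x \<in> space M \<Longrightarrow> 0 \<le> q x"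
    and p_prob: "(\<integral>\<^sup>+x. ennreal (p x) \<partial>M) = 1" and q_prob: "(\<integral>\<^sup>+x. ennreal (q x) \<partial>M) = 1"
    and ratio: "AE x in M. p x \<le> b * q x \<and> q x \<le> b * p x"
    using dens by (auto simp: ratio_bounded_densities_def)
  have int: "integrable M p" "integrable M q"
    using p_prob q_prob by (auto intro!: integrableI_nonneg AE_I2 simp: p_nonneg q_nonneg)
  have one: "integral\<^sup>L M p = 1" "integral\<^sup>L M q = 1"
    using p_prob q_prob nn_integral_eq_integral[OF int(1)] nn_integral_eq_integral[OF int(2)]
    by (auto intro: AE_I2 simp: p_nonneg q_nonneg)
  have int_g: "integrable M (\<lambda>x. r x * g x)"
    if "integrable M r" "\<And>x. x \<in> space M \<Longrightarrow> 0 \<le> r x" for r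
  proof (rule Bochner_Integration.integrable_bound[OF that(1)])
    show "(\<lambda>x. r x * g x) \<in> borel_measurable M" using that(1) by measurable
    show "AE x in M. norm (r x * g x) \<le> norm (r x)"
      using AE_space by eventually_elim (simp add: abs_mult mult_left_le g_bound that(2))
  qed
  note int_pg = int_g[OF int(1) p_nonneg] and int_qg = int_g[OF int(2) q_nonneg]
  have "(\<integral>x. g x \<partial>density M p) - (\<integral>x. g x \<partial>density M q) = (\<integral>x. (p x - q x) * g x \<partial>M)"
    using int_pg int_qg by (simp add: integral_density p_nonneg q_nonneg AE_I2 left_diff_distrib)
  also have "\<dots> \<le> (\<integral>x. \<bar>p x - q x\<bar> \<partial>M)"
  proof (rule integral_mono)
    show "integrable M (\<lambda>x. (p x - q x) * g x)" using int_pg int_qg by (simp add: left_diff_distrib)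
    show "integrable M (\<lambda>x. \<bar>p x - q x\<bar>)" using int by simp
    show "(p x - q x) * g x \<le> \<bar>p x - q x\<bar>" if "x \<in> space M" for x
      using abs_ge_self[of "(p x - q x) * g x"] mult_left_le[OF g_bound[OF that] abs_ge_zero[of "p x - q x"]]
      by (simp add: abs_mult)
  qed
  also have "\<dots> \<le> (\<integral>x. 2 * (b * q x - p x) / (b + 1) - (q x - p x) \<partial>M)"
  proof (rule integral_mono_AE)
    show "AE x in M. \<bar>p x - q x\<bar> \<le> 2 * (b * q x - p x) / (b + 1) - (q x - p x)"
      using ratio by eventually_elim (use b abs_diff_le_of_mutual_ratio_bound in blast)
  qed (use int in simp_all)
  also have "\<dots> = 2 * (b - 1) / (b + 1)"
    using int one by simp
  finally show ?thesis .
qed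

lemma tv_dist_distr_density_le:
  fixes p q :: "'a \<Rightarrow> real"
  assumes dens: "ratio_bounded_densities M b p q" and b: "1 \<le> b" and T[measurable]: "T \<in> M \<rightarrow>\<^sub>M N"
  shows "tv_dist (distr (density M p) N T) (distr (density M q) N T) \<le> (b - 1) / (b + 1)"
proof -
  let ?P = "distr (density M p) N T" and ?Q = "distr (density M q) N T"
  have "(\<integral>y. m y \<partial>?P) - (\<integral>y. m y \<partial>?Q) \<le> 2 * (b - 1) / (b + 1)"
    if m: "m \<in> borel_measurable ?P" "\<forall>y\<in>space ?P. \<bar>m y\<bar> \<le> 1" for m
  proof -
    have [measurable]: "m \<in> borel_measurable N" using m(1) by (simp cong: measurable_cong_sets)
    have [measurable]: "p \<in> borel_measurable M" "q \<in> borel_measurable M"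
      using dens by (auto simp: ratio_bounded_densities_def)
    have "(\<integral>y. m y \<partial>?P) - (\<integral>y. m y \<partial>?Q) = (\<integral>x. m (T x) \<partial>density M p) - (\<integral>x. m (T x) \<partial>density M q)"
      by (simp add: integral_distr)
    also have "\<dots> \<le> 2 * (b - 1) / (b + 1)"
      using m(2) measurable_space[OF T]
      by (intro integral_diff_density_le[OF dens b]) auto
    finally show ?thesis .
  qed
  then have "(SUP m \<in> {m \<in> borel_measurable ?P. \<forall>y\<in>space ?P. \<bar>m y\<bar> \<le> 1}.
      (\<integral>y. m y \<partial>?P) - (\<integral>y. m y \<partial>?Q)) \<le> 2 * (b - 1) / (b + 1)"
    by (intro cSUP_least) (auto intro: exI[of _ "\<lambda>_. 0"])
  moreover have "2 * (b - 1) / (b + 1) = 2 * ((b - 1) / (b + 1))" by simp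
  ultimately show ?thesis unfolding tv_dist_def by linarith
qed

section \<open>Reweighting a joint density\<close>

lemma ennreal_enn2real_of_nn_integral_eq_1:
  fixes G :: "'a \<Rightarrow> ennreal"
  assumes "G \<in> borel_measurable M" "(\<integral>\<^sup>+x. G x \<partial>M) = 1"
  shows "AE x in M. ennreal (enn2real (G x)) = G x"
    and "(\<integral>\<^sup>+x. ennreal (enn2real (G x)) \<partial>M) = 1"
proof -
  have "AE x in M. G x \<noteq> \<infinity>" using assms by (intro nn_integral_PInf_AE) auto
  then show ae: "AE x in M. ennreal (enn2real (G x)) = G x"
    by eventually_elim (simp add: less_top)
  show "(\<integral>\<^sup>+x. ennreal (enn2real (G x)) \<partial>M) = 1"
    using nn_integral_cong_AE[OF ae] assms(2) by simp
qed

lemma normalized_density_ratio_bounds: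
  fixes h p :: "'a \<Rightarrow> real" and c :: real
  assumes [measurable]: "h \<in> borel_measurable M" "p \<in> borel_measurable M"
    and h_nonneg: "\<And>x. x \<in> space M \<Longrightarrow> 0 \<le> h x" and p_nonneg: "\<And>x. x \<in> space M \<Longrightarrow> 0 \<le> p x"
    and p_prob: "(\<integral>\<^sup>+x. ennreal (p x) \<partial>M) = 1"
    and ratio: "AE x in M. p x / c \<le> h x \<and> h x \<le> c * p x" and c: "1 \<le> c"
  defines "Z \<equiv> enn2real (\<integral>\<^sup>+x. ennreal (h x) \<partial>M)"
  shows "AE x in M. p x \<le> c^2 * (h x / Z) \<and> h x / Z \<le> c^2 * p x"
    and "(\<integral>\<^sup>+x. ennreal (h x / Z) \<partial>M) = 1"
proof -
  have "AE x in M. ennreal (h x) \<le> ennreal c * ennreal (p x)"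
    using ratio AE_space by eventually_elim (use c p_nonneg in \<open>simp flip: ennreal_mult add: ennreal_leI\<close>)
  then have "(\<integral>\<^sup>+x. ennreal (h x) \<partial>M) \<le> (\<integral>\<^sup>+x. ennreal c * ennreal (p x) \<partial>M)"
    by (rule nn_integral_mono_AE)
  then have upper: "(\<integral>\<^sup>+x. ennreal (h x) \<partial>M) \<le> ennreal c"
    by (simp add: nn_integral_cmult p_prob)
  have "AE x in M. ennreal (1 / c) * ennreal (p x) \<le> ennreal (h x)"
    using ratio AE_space by eventually_elim (use c p_nonneg in \<open>simp flip: ennreal_mult add: ennreal_leI\<close>)
  then have "(\<integral>\<^sup>+x. ennreal (1 / c) * ennreal (p x) \<partial>M) \<le> (\<integral>\<^sup>+x. ennreal (h x) \<partial>M)"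
    by (rule nn_integral_mono_AE)
  then have lower: "ennreal (1 / c) \<le> (\<integral>\<^sup>+x. ennreal (h x) \<partial>M)"
    by (simp add: nn_integral_cmult p_prob)
  have Z: "ennreal Z = (\<integral>\<^sup>+x. ennreal (h x) \<partial>M)"
    using upper unfolding Z_def by (intro ennreal_enn2real) (simp add: le_less_trans)
  have "1 / c \<le> Z" "Z \<le> c"
    using lower upper c unfolding Z[symmetric] by (auto simp: ennreal_le_iff Z_def)
  moreover have "0 < 1 / c" using c by simp
  ultimately have Z_pos: "0 < Z" by linarith
  have inv_Z: "1 / Z \<le> c"
    using \<open>1 / c \<le> Z\<close> Z_pos c by (simp add: divide_le_eq le_divide_eq mult.commute)
  show "AE x in M. p x \<le> c^2 * (h x / Z) \<and> h x / Z \<le> c^2 * p x"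
    using ratio AE_space
  proof eventually_elim
    case (elim x)
    have "h x / Z = h x * (1 / Z)" by simp
    also have "\<dots> \<le> (c * p x) * c"
      using elim inv_Z Z_pos h_nonneg p_nonneg c by (intro mult_mono) auto
    finally have upper: "h x / Z \<le> c^2 * p x" by (simp add: power2_eq_square ac_simps)
    have "p x \<le> c * h x" using elim c by (simp add: divide_le_eq mult.commute)
    also have "\<dots> = c * Z * (h x / Z)" using Z_pos by simp
    also have "\<dots> \<le> c * c * (h x / Z)"
      using \<open>Z \<le> c\<close> c Z_pos h_nonneg elim by (intro mult_right_mono mult_left_mono) auto
    finally show ?case using upper by (simp add: power2_eq_square)
  qed
  have "(\<integral>\<^sup>+x. ennreal (h x / Z) \<partial>M) = (\<integral>\<^sup>+x. ennreal (h x) * ennreal (1 / Z) \<partial>M)"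
    using Z_pos h_nonneg by (intro nn_integral_cong) (simp flip: ennreal_mult)
  also have "\<dots> = ennreal Z * ennreal (1 / Z)" by (simp add: nn_integral_multc Z)
  also have "\<dots> = 1" using Z_pos by (simp flip: ennreal_mult)
  finally show "(\<integral>\<^sup>+x. ennreal (h x / Z) \<partial>M) = 1" .
qed

text \<open>Here \<open>q\<close> is one section of \<open>q_eta (x | t, z) p(t, z)\<close>, with \<open>F = f(-, t, z)\<close> and
  \<open>A = p(t, z)\<close>; the factor \<open>A\<close> cancels except when \<open>A = 0\<close>, where \<open>q\<close> vanishes by \<open>x / 0 = 0\<close>.\<close>

lemma reweighted_conditional_density_bounds:
  fixes M :: "'a measure" and F W p :: "'a \<Rightarrow> real" and A c :: real
  defines "q \<equiv> \<lambda>x. W x * (F x / A) / enn2real (\<integral>\<^sup>+x'. ennreal (W x' * (F x' / A)) \<partial>M) * A"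
  assumes [measurable]: "F \<in> borel_measurable M" "W \<in> borel_measurable M" "p \<in> borel_measurable M"
    and F_nonneg: "\<And>x. x \<in> space M \<Longrightarrow> 0 \<le> F x" and W_nonneg: "\<And>x. x \<in> space M \<Longrightarrow> 0 \<le> W x"
    and p_nonneg: "\<And>x. x \<in> space M \<Longrightarrow> 0 \<le> p x" and p_prob: "(\<integral>\<^sup>+x. ennreal (p x) \<partial>M) = 1"
    and A: "0 \<le> A" and c: "1 \<le> c"
    and ratio: "AE x in M. p x / c \<le> W x * F x \<and> W x * F x \<le> c * p x"
  shows "AE x in M. p x * A \<le> c^2 * q x \<and> q x \<le> c^2 * (p x * A)"
    and "(\<integral>\<^sup>+x. ennreal (q x) \<partial>M) = ennreal A"
proof -
  consider "A = 0" | "0 < A" using A by linarith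
  then have "(AE x in M. p x * A \<le> c^2 * q x \<and> q x \<le> c^2 * (p x * A))
      \<and> (\<integral>\<^sup>+x. ennreal (q x) \<partial>M) = ennreal A"
  proof cases
    case 1
    then show ?thesis by (simp add: q_def)
  next
    case A_pos: 2
    define h where "h x = W x * F x" for x
    define Z where "Z = enn2real (\<integral>\<^sup>+x. ennreal (h x) \<partial>M)"
    have h_nonneg: "\<And>x. x \<in> space M \<Longrightarrow> 0 \<le> h x" by (simp add: h_def F_nonneg W_nonneg)
    have "(\<integral>\<^sup>+x. ennreal (W x * (F x / A)) \<partial>M) = (\<integral>\<^sup>+x. ennreal (h x) * ennreal (1 / A) \<partial>M)"
      using A_pos h_nonneg by (intro nn_integral_cong) (simp add: h_def flip: ennreal_mult)
    also have "\<dots> = (\<integral>\<^sup>+x. ennreal (h x) \<partial>M) * ennreal (1 / A)"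
      unfolding h_def by (rule nn_integral_multc) measurable
    finally have "enn2real (\<integral>\<^sup>+x. ennreal (W x * (F x / A)) \<partial>M) = Z / A"
      using A_pos by (simp add: Z_def enn2real_mult)
    then have q_eq: "q x = h x / Z * A" for x
      using A_pos by (simp add: q_def h_def)
    have h_meas: "h \<in> borel_measurable M" unfolding h_def by measurable
    have "AE x in M. p x / c \<le> h x \<and> h x \<le> c * p x" using ratio by (simp add: h_def)
    note normalized = normalized_density_ratio_bounds[OF h_meas \<open>p \<in> borel_measurable M\<close> h_nonneg p_nonneg p_prob
        this c, folded Z_def]
    have "AE x in M. p x * A \<le> c^2 * q x \<and> q x \<le> c^2 * (p x * A)"
    proof (rule eventually_mono[OF normalized(1)])
      fix x assume bounds: "p x \<le> c^2 * (h x / Z) \<and> h x / Z \<le> c^2 * p x"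
      then show "p x * A \<le> c^2 * q x \<and> q x \<le> c^2 * (p x * A)" unfolding q_eq
        using mult_right_mono[OF conjunct1[OF bounds], of A] mult_right_mono[OF conjunct2[OF bounds], of A] A_pos
        by (simp add: ac_simps)
    qed
    moreover have "(\<integral>\<^sup>+x. ennreal (q x) \<partial>M) = ennreal A"
    proof -
      have "(\<integral>\<^sup>+x. ennreal (q x) \<partial>M) = (\<integral>\<^sup>+x. ennreal (h x / Z) * ennreal A \<partial>M)"
        using A_pos h_nonneg by (intro nn_integral_cong) (simp add: q_eq Z_def flip: ennreal_mult)
      also have "\<dots> = (\<integral>\<^sup>+x. ennreal (h x / Z) \<partial>M) * ennreal A"
        using h_meas by (intro nn_integral_multc) simp
      finally show ?thesis using normalized(2) by simp
    qed
    ultimately show ?thesis ..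
  qed
  then show "AE x in M. p x * A \<le> c^2 * q x \<and> q x \<le> c^2 * (p x * A)"
    and "(\<integral>\<^sup>+x. ennreal (q x) \<partial>M) = ennreal A" by auto
qed

lemma (in pair_sigma_finite) marginal_densities:
  fixes f :: "'a \<times> 'b \<Rightarrow> real"
  defines "p1 \<equiv> \<lambda>x. enn2real (\<integral>\<^sup>+y. ennreal (f (x, y)) \<partial>M2)"
    and "p2 \<equiv> \<lambda>y. enn2real (\<integral>\<^sup>+x. ennreal (f (x, y)) \<partial>M1)"
  assumes [measurable]: "f \<in> borel_measurable (M1 \<Otimes>\<^sub>M M2)"
    and f_prob: "(\<integral>\<^sup>+z. ennreal (f z) \<partial>(M1 \<Otimes>\<^sub>M M2)) = 1"
  shows "AE x in M1. ennreal (p1 x) = (\<integral>\<^sup>+y. ennreal (f (x, y)) \<partial>M2)"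
    and "(\<integral>\<^sup>+x. ennreal (p1 x) \<partial>M1) = 1"
    and "AE y in M2. ennreal (p2 y) = (\<integral>\<^sup>+x. ennreal (f (x, y)) \<partial>M1)"
    and "(\<integral>\<^sup>+y. ennreal (p2 y) \<partial>M2) = 1"
    and "(\<integral>\<^sup>+z. ennreal (p1 (fst z) * p2 (snd z)) \<partial>(M1 \<Otimes>\<^sub>M M2)) = 1"
proof -
  have "(\<integral>\<^sup>+x. (\<integral>\<^sup>+y. ennreal (f (x, y)) \<partial>M2) \<partial>M1) = 1"
    using M2.nn_integral_fst[of "\<lambda>z. ennreal (f z)"] f_prob by simp
  moreover have "(\<lambda>x. \<integral>\<^sup>+y. ennreal (f (x, y)) \<partial>M2) \<in> borel_measurable M1" by measurable
  ultimately show marg1: "AE x in M1. ennreal (p1 x) = (\<integral>\<^sup>+y. ennreal (f (x, y)) \<partial>M2)"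
    "(\<integral>\<^sup>+x. ennreal (p1 x) \<partial>M1) = 1"
    unfolding p1_def by (auto intro: ennreal_enn2real_of_nn_integral_eq_1)
  have "(\<integral>\<^sup>+y. (\<integral>\<^sup>+x. ennreal (f (x, y)) \<partial>M1) \<partial>M2) = 1"
    using nn_integral_snd[of "\<lambda>z. ennreal (f z)"] f_prob by simp
  moreover have "(\<lambda>y. \<integral>\<^sup>+x. ennreal (f (x, y)) \<partial>M1) \<in> borel_measurable M2" by measurable
  ultimately show marg2: "AE y in M2. ennreal (p2 y) = (\<integral>\<^sup>+x. ennreal (f (x, y)) \<partial>M1)"
    "(\<integral>\<^sup>+y. ennreal (p2 y) \<partial>M2) = 1"
    unfolding p2_def by (auto intro: ennreal_enn2real_of_nn_integral_eq_1)
  have [measurable]: "p1 \<in> borel_measurable M1" "p2 \<in> borel_measurable M2"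
    unfolding p1_def p2_def by measurable
  have "(\<integral>\<^sup>+z. ennreal (p1 (fst z) * p2 (snd z)) \<partial>(M1 \<Otimes>\<^sub>M M2))
      = (\<integral>\<^sup>+x. (\<integral>\<^sup>+y. ennreal (p1 x) * ennreal (p2 y) \<partial>M2) \<partial>M1)"
    by (subst M2.nn_integral_fst[symmetric]) (auto simp: p1_def p2_def ennreal_mult)
  also have "\<dots> = 1"
    using marg1(2) marg2(2) by (simp add: nn_integral_cmult nn_integral_multc)
  finally show "(\<integral>\<^sup>+z. ennreal (p1 (fst z) * p2 (snd z)) \<partial>(M1 \<Otimes>\<^sub>M M2)) = 1" .
qed

lemma (in pair_sigma_finite) AE_eq_0_where_marginal_eq_0:
  fixes f :: "'a \<times> 'b \<Rightarrow> real"
  assumes [measurable]: "f \<in> borel_measurable (M1 \<Otimes>\<^sub>M M2)"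
    and f_nonneg: "\<And>z. z \<in> space (M1 \<Otimes>\<^sub>M M2) \<Longrightarrow> 0 \<le> f z"
    and f_prob: "(\<integral>\<^sup>+z. ennreal (f z) \<partial>(M1 \<Otimes>\<^sub>M M2)) = 1"
  shows "AE y in M2. AE x in M1. enn2real (\<integral>\<^sup>+y'. ennreal (f (x, y')) \<partial>M2) = 0 \<longrightarrow> f (x, y) = 0"
proof -
  have "AE x in M1. enn2real (\<integral>\<^sup>+y'. ennreal (f (x, y')) \<partial>M2) = 0 \<longrightarrow> (AE y in M2. f (x, y) = 0)"
    using marginal_densities(1)[OF assms(1) f_prob] AE_space
  proof eventually_elim
    case (elim x)
    show ?case
    proof
      assume "enn2real (\<integral>\<^sup>+y'. ennreal (f (x, y')) \<partial>M2) = 0"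
      then have "(\<integral>\<^sup>+y. ennreal (f (x, y)) \<partial>M2) = 0" using elim by simp
      then have "AE y in M2. ennreal (f (x, y)) = 0"
        using elim by (subst (asm) nn_integral_0_iff_AE) (auto intro: measurable_compose_Pair1)
      then show "AE y in M2. f (x, y) = 0"
        using AE_space by eventually_elim
          (use elim f_nonneg in \<open>auto simp: ennreal_eq_0_iff antisym space_pair_measure\<close>)
    qed
  qed
  then have "AE x in M1. AE y in M2. enn2real (\<integral>\<^sup>+y'. ennreal (f (x, y')) \<partial>M2) = 0 \<longrightarrow> f (x, y) = 0"
    by auto
  then show ?thesis by (subst (asm) AE_commute) measurable
qed

lemma (in pair_sigma_finite) reweighted_joint_density_ratio_bounded:
  fixes f :: "'a \<times> 'b \<Rightarrow> real" and W :: "'b \<Rightarrow> 'a \<Rightarrow> real" and c :: real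
  defines "p1 \<equiv> \<lambda>x. enn2real (\<integral>\<^sup>+y. ennreal (f (x, y)) \<partial>M2)"
    and "p2 \<equiv> \<lambda>y. enn2real (\<integral>\<^sup>+x. ennreal (f (x, y)) \<partial>M1)"
  defines "q \<equiv> \<lambda>(x, y). W y x * (f (x, y) / p2 y)
      / enn2real (\<integral>\<^sup>+x'. ennreal (W y x' * (f (x', y) / p2 y)) \<partial>M1) * p2 y"
  assumes [measurable]: "f \<in> borel_measurable (M1 \<Otimes>\<^sub>M M2)" "(\<lambda>(x, y). W y x) \<in> borel_measurable (M1 \<Otimes>\<^sub>M M2)"
    and f_nonneg: "\<And>z. z \<in> space (M1 \<Otimes>\<^sub>M M2) \<Longrightarrow> 0 \<le> f z"
    and W_nonneg: "\<And>x y. x \<in> space M1 \<Longrightarrow> y \<in> space M2 \<Longrightarrow> 0 \<le> W y x"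
    and f_prob: "(\<integral>\<^sup>+z. ennreal (f z) \<partial>(M1 \<Otimes>\<^sub>M M2)) = 1"
    and c: "1 \<le> c"
    and ratio: "\<And>x y. x \<in> space M1 \<Longrightarrow> y \<in> space M2 \<Longrightarrow> 0 < p1 x \<Longrightarrow>
      p1 x / c \<le> W y x * f (x, y) \<and> W y x * f (x, y) \<le> c * p1 x"
  shows "ratio_bounded_densities (M1 \<Otimes>\<^sub>M M2) (c^2) (\<lambda>z. p1 (fst z) * p2 (snd z)) q"
proof -
  have [measurable]: "p1 \<in> borel_measurable M1" "p2 \<in> borel_measurable M2" "q \<in> borel_measurable (M1 \<Otimes>\<^sub>M M2)"
    unfolding p1_def p2_def q_def by measurable
  have f_nonneg': "0 \<le> f (x, y)" if "x \<in> space M1" "y \<in> space M2" for x y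
    using f_nonneg that by (simp add: space_pair_measure)
  note marg = marginal_densities[OF \<open>f \<in> borel_measurable (M1 \<Otimes>\<^sub>M M2)\<close> f_prob]
  have section_bounds: "(AE x in M1. p1 x * p2 y \<le> c^2 * q (x, y) \<and> q (x, y) \<le> c^2 * (p1 x * p2 y))
      \<and> (\<integral>\<^sup>+x. ennreal (q (x, y)) \<partial>M1) = ennreal (p2 y)"
    if y: "y \<in> space M2" and null_y: "AE x in M1. p1 x = 0 \<longrightarrow> f (x, y) = 0" for y
  proof -
    have "AE x in M1. p1 x / c \<le> W y x * f (x, y) \<and> W y x * f (x, y) \<le> c * p1 x"
      using null_y AE_space
    proof eventually_elim
      case (elim x)
      show ?case
      proof (cases "p1 x = 0")
        case False
        then show ?thesis using ratio elim y by (simp add: p1_def less_le)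
      qed (use elim in simp)
    qed
    moreover have "(\<lambda>x. f (x, y)) \<in> borel_measurable M1" "(\<lambda>x. W y x) \<in> borel_measurable M1"
      using y by measurable
    ultimately show ?thesis
      using reweighted_conditional_density_bounds[of "\<lambda>x. f (x, y)" M1 "W y" p1 "p2 y" c]
        f_nonneg' W_nonneg y marg(2) c
      unfolding q_def prod.case by (simp add: p1_def p2_def)
  qed
  have "AE y in M2. AE x in M1. p1 x = 0 \<longrightarrow> f (x, y) = 0"
    unfolding p1_def using AE_eq_0_where_marginal_eq_0[OF _ f_nonneg f_prob] by simp
  then have sections: "AE y in M2. (AE x in M1. p1 x * p2 y \<le> c^2 * q (x, y) \<and> q (x, y) \<le> c^2 * (p1 x * p2 y))
      \<and> (\<integral>\<^sup>+x. ennreal (q (x, y)) \<partial>M1) = ennreal (p2 y)"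
    using AE_space by eventually_elim (rule section_bounds)
  then have "AE y in M2. AE x in M1. p1 x * p2 y \<le> c^2 * q (x, y) \<and> q (x, y) \<le> c^2 * (p1 x * p2 y)"
    by (rule eventually_mono) simp
  then have "AE x in M1. AE y in M2. p1 x * p2 y \<le> c^2 * q (x, y) \<and> q (x, y) \<le> c^2 * (p1 x * p2 y)"
    by (subst AE_commute) measurable
  then have ratio_bound: "AE z in M1 \<Otimes>\<^sub>M M2. p1 (fst z) * p2 (snd z) \<le> c^2 * q z \<and> q z \<le> c^2 * (p1 (fst z) * p2 (snd z))"
    by (intro AE_pair_measure) auto
  have "(\<integral>\<^sup>+z. ennreal (q z) \<partial>(M1 \<Otimes>\<^sub>M M2)) = (\<integral>\<^sup>+y. (\<integral>\<^sup>+x. ennreal (q (x, y)) \<partial>M1) \<partial>M2)"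
    by (rule nn_integral_snd[symmetric]) measurable
  also have "\<dots> = (\<integral>\<^sup>+y. ennreal (p2 y) \<partial>M2)"
    using sections by (intro nn_integral_cong_AE) (auto elim: eventually_mono)
  finally have q_prob: "(\<integral>\<^sup>+z. ennreal (q z) \<partial>(M1 \<Otimes>\<^sub>M M2)) = 1" using marg(4) by (simp add: p2_def)
  have q_nonneg: "0 \<le> q z" if "z \<in> space (M1 \<Otimes>\<^sub>M M2)" for z
    using that f_nonneg' W_nonneg by (auto simp: q_def p2_def space_pair_measure split: prod.split)
  show ?thesis
    unfolding ratio_bounded_densities_def using ratio_bound q_prob q_nonneg marg(5)
    by (auto simp: p1_def p2_def)
qed

section \<open>The propensity model\<close>

lemma sigma_finite_TZ: "sigma_finite_measure TZ"
  unfolding TZ_def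
proof (rule sigma_finite_pair_measure)
  show "sigma_finite_measure (count_space (UNIV :: bool set))"
    by (rule sigma_finite_measure_count_space_countable) simp
  show "sigma_finite_measure (restrict_space lborel {0..(1::real)})"
    by (rule sigma_finite_measure_restrict_space) (simp_all add: sigma_finite_lborel)
qed

lemma P_meas_eq_density:
  assumes "sigma_finite_measure MX" and [measurable]: "f \<in> borel_measurable (MX \<Otimes>\<^sub>M TZ)"
  shows "P_meas MX f = density (MX \<Otimes>\<^sub>M TZ) (\<lambda>z. marg_x MX f (fst z) * marg_tz MX f (snd z))"
proof -
  interpret MX: sigma_finite_measure MX by fact
  interpret TZ: sigma_finite_measure TZ by (rule sigma_finite_TZ)
  have [measurable]: "marg_x MX f \<in> borel_measurable MX" "marg_tz MX f \<in> borel_measurable TZ"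
    unfolding marg_x_def marg_tz_def by measurable
  have "sigma_finite_measure (density TZ (\<lambda>tz. ennreal (marg_tz MX f tz)))"
    by (subst TZ.sigma_finite_iff_density_finite) auto
  then have "P_meas MX f = density (MX \<Otimes>\<^sub>M TZ) (\<lambda>(x, tz). ennreal (marg_x MX f x) * ennreal (marg_tz MX f tz))"
    unfolding P_meas_def by (intro pair_measure_density) (auto intro: sigma_finite_TZ)
  also have "\<dots> = density (MX \<Otimes>\<^sub>M TZ) (\<lambda>z. marg_x MX f (fst z) * marg_tz MX f (snd z))"
    by (intro density_cong) (auto simp: marg_x_def marg_tz_def ennreal_mult)
  finally show ?thesis .
qed

lemma P_Phi_eq_distr_P_meas:
  assumes "sigma_finite_measure MX" and [measurable]: "f \<in> borel_measurable (MX \<Otimes>\<^sub>M TZ)" "\<Phi> \<in> MX \<rightarrow>\<^sub>M MR"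
  shows "P_Phi MX MR \<Phi> f = distr (P_meas MX f) (MR \<Otimes>\<^sub>M TZ) (\<lambda>(x, tz). (\<Phi> x, tz))"
proof -
  interpret MX: sigma_finite_measure MX by fact
  interpret TZ: sigma_finite_measure TZ by (rule sigma_finite_TZ)
  let ?pt = "density TZ (\<lambda>tz. ennreal (marg_tz MX f tz))"
  have [measurable]: "marg_tz MX f \<in> borel_measurable TZ"
    unfolding marg_tz_def by measurable
  have "sigma_finite_measure ?pt"
    by (subst TZ.sigma_finite_iff_density_finite) auto
  moreover have id: "distr ?pt TZ (\<lambda>tz. tz) = ?pt" by (rule distr_id2) simp
  ultimately show ?thesis
    unfolding P_Phi_def P_meas_def
    by (subst pair_measure_distr[of _ _ _ "\<lambda>tz. tz", unfolded id, symmetric]) simp_all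
qed

lemma ratio_bounded_densities_P_meas_Q_meas:
  fixes MX :: "'x measure" and f :: "'x \<times> (bool \<times> real) \<Rightarrow> real"
    and w :: "bool \<times> real \<Rightarrow> 'x \<Rightarrow> real" and c :: real
  assumes "sigma_finite_measure MX" and f_meas: "f \<in> borel_measurable (MX \<Otimes>\<^sub>M TZ)"
    and f_nonneg: "\<And>y. y \<in> space (MX \<Otimes>\<^sub>M TZ) \<Longrightarrow> 0 \<le> f y"
    and f_prob: "(\<integral>\<^sup>+ y. ennreal (f y) \<partial>(MX \<Otimes>\<^sub>M TZ)) = 1"
    and w_meas: "(\<lambda>(x, tz). w tz x) \<in> borel_measurable (MX \<Otimes>\<^sub>M TZ)"
    and w_nonneg: "\<And>x tz. x \<in> space MX \<Longrightarrow> tz \<in> space TZ \<Longrightarrow> 0 \<le> w tz x"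
    and c: "1 \<le> c"
    and w_ratio: "\<And>x tz. x \<in> space MX \<Longrightarrow> tz \<in> space TZ \<Longrightarrow> 0 < marg_x MX f x \<Longrightarrow>
      marg_x MX f x / c \<le> w tz x * f (x, tz) \<and> w tz x * f (x, tz) \<le> c * marg_x MX f x"
  shows "ratio_bounded_densities (MX \<Otimes>\<^sub>M TZ) (c^2) (\<lambda>z. marg_x MX f (fst z) * marg_tz MX f (snd z))
    (\<lambda>(x, tz). q_eta MX f w tz x * marg_tz MX f tz)"
proof -
  interpret MX: sigma_finite_measure MX by fact
  interpret TZ: sigma_finite_measure TZ by (rule sigma_finite_TZ)
  interpret pair_sigma_finite MX TZ ..
  show ?thesis
    unfolding marg_x_def marg_tz_def q_eta_def cond_x_def
    by (rule reweighted_joint_density_ratio_bounded[OF f_meas w_meas f_nonneg w_nonneg f_prob c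
          w_ratio[unfolded marg_x_def]])
qed

lemma inverse_propensity_weight_bounds:
  fixes MX :: "'x measure" and f :: "'x \<times> (bool \<times> real) \<Rightarrow> real"
    and \<pi>t :: "'x \<Rightarrow> 'a" and \<pi>z :: "'x \<Rightarrow> 'b"
    and e e\<eta> :: "bool \<Rightarrow> 'a \<Rightarrow> real" and \<phi> \<phi>\<eta> :: "real \<Rightarrow> 'b \<Rightarrow> real" and \<Gamma>t \<Gamma>z :: real
  assumes e_pmf: "\<And>x t. x \<in> space MX \<Longrightarrow> 0 \<le> e t (\<pi>t x)"
    and \<phi>_dens: "\<And>x z. x \<in> space MX \<Longrightarrow> z \<in> {0..1} \<Longrightarrow> 0 \<le> \<phi> z (\<pi>z x)"
    and factorized: "\<And>x t z. x \<in> space MX \<Longrightarrow> z \<in> {0..1} \<Longrightarrow> 0 < marg_x MX f x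
        \<Longrightarrow> post_tz MX f x (t, z) = \<phi> z (\<pi>z x) * e t (\<pi>t x)"
    and e\<eta>_meas: "(\<lambda>(x, t, z). e\<eta> t (\<pi>t x)) \<in> borel_measurable (MX \<Otimes>\<^sub>M TZ)"
    and \<phi>\<eta>_meas: "(\<lambda>(x, t, z). \<phi>\<eta> z (\<pi>z x)) \<in> borel_measurable (MX \<Otimes>\<^sub>M TZ)"
    and \<Gamma>t_ge: "1 \<le> \<Gamma>t" and \<Gamma>z_ge: "1 \<le> \<Gamma>z"
    and odds_t: "\<And>x t. x \<in> space MX \<Longrightarrow>
        inverse \<Gamma>t \<le> e\<eta> t (\<pi>t x) / e t (\<pi>t x) \<and> e\<eta> t (\<pi>t x) / e t (\<pi>t x) \<le> \<Gamma>t"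
    and odds_z: "\<And>x z. x \<in> space MX \<Longrightarrow> z \<in> {0..1} \<Longrightarrow>
        inverse \<Gamma>z \<le> \<phi>\<eta> z (\<pi>z x) / \<phi> z (\<pi>z x) \<and> \<phi>\<eta> z (\<pi>z x) / \<phi> z (\<pi>z x) \<le> \<Gamma>z"
  defines "w \<equiv> (\<lambda>(t, z) x. 1 / (\<phi>\<eta> z (\<pi>z x) * e\<eta> t (\<pi>t x)))"
  shows "(\<lambda>(x, tz). w tz x) \<in> borel_measurable (MX \<Otimes>\<^sub>M TZ)"
    and "\<And>x tz. x \<in> space MX \<Longrightarrow> tz \<in> space TZ \<Longrightarrow> 0 \<le> w tz x"
    and "\<And>x tz. x \<in> space MX \<Longrightarrow> tz \<in> space TZ \<Longrightarrow> 0 < marg_x MX f x \<Longrightarrow>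
      marg_x MX f x / (\<Gamma>t * \<Gamma>z) \<le> w tz x * f (x, tz) \<and> w tz x * f (x, tz) \<le> \<Gamma>t * \<Gamma>z * marg_x MX f x"
proof -
  have "(\<lambda>(x, tz). w tz x) = (\<lambda>y. 1 / ((\<lambda>(x, t, z). \<phi>\<eta> z (\<pi>z x)) y * (\<lambda>(x, t, z). e\<eta> t (\<pi>t x)) y))"
    by (auto simp: w_def fun_eq_iff)
  then show "(\<lambda>(x, tz). w tz x) \<in> borel_measurable (MX \<Otimes>\<^sub>M TZ)"
    using e\<eta>_meas \<phi>\<eta>_meas by simp
  fix x tz assume x: "x \<in> space MX" and "tz \<in> space TZ"
  then obtain t z where tz: "tz = (t, z)" and z: "z \<in> {0..1}"
    by (cases tz) (auto simp: TZ_def space_pair_measure)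
  note bounds = inverse_weight_bounds[OF \<phi>_dens[OF x z] \<Gamma>z_ge odds_z[OF x z, THEN conjunct1]
      odds_z[OF x z, THEN conjunct2] e_pmf[OF x] \<Gamma>t_ge odds_t[OF x, of t, THEN conjunct1]
      odds_t[OF x, of t, THEN conjunct2]]
  show "0 \<le> w tz x" using bounds(1)[OF order_refl] by (simp add: w_def tz)
  assume pos: "0 < marg_x MX f x"
  then have "w tz x * f (x, tz) = 1 / (\<phi>\<eta> z (\<pi>z x) * e\<eta> t (\<pi>t x)) * (\<phi> z (\<pi>z x) * e t (\<pi>t x) * marg_x MX f x)"
    using factorized[OF x z pos, of t] by (simp add: w_def tz post_tz_def field_simps)
  then show "marg_x MX f x / (\<Gamma>t * \<Gamma>z) \<le> w tz x * f (x, tz) \<and> w tz x * f (x, tz) \<le> \<Gamma>t * \<Gamma>z * marg_x MX f x"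
    using bounds(2,3)[of "marg_x MX f x"] pos by (simp add: mult.commute)
qed

theorem mainTheorem4:
  fixes MX :: "'x measure" and MR :: "'r measure"
    and f :: "'x \<times> (bool \<times> real) \<Rightarrow> real"
    and \<pi>t :: "'x \<Rightarrow> 'a" and \<pi>z :: "'x \<Rightarrow> 'b"
    and e e\<eta> :: "bool \<Rightarrow> 'a \<Rightarrow> real" and \<phi> \<phi>\<eta> :: "real \<Rightarrow> 'b \<Rightarrow> real"
    and \<Gamma>t \<Gamma>z :: real and \<Phi> :: "'x \<Rightarrow> 'r"
  assumes sf: "sigma_finite_measure MX"
    and f_meas: "f \<in> borel_measurable (MX \<Otimes>\<^sub>M TZ)"
    and f_nonneg: "\<And>y. y \<in> space (MX \<Otimes>\<^sub>M TZ) \<Longrightarrow> 0 \<le> f y"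
    and f_prob: "(\<integral>\<^sup>+ y. ennreal (f y) \<partial>(MX \<Otimes>\<^sub>M TZ)) = 1"
    and overlap: "\<And>x t z. x \<in> space MX \<Longrightarrow> z \<in> {0..1} \<Longrightarrow> 0 < marg_x MX f x
        \<Longrightarrow> 0 < post_tz MX f x (t, z)"
    and e_pmf: "\<And>x t. x \<in> space MX \<Longrightarrow> 0 \<le> e t (\<pi>t x)"
    and e_sum: "\<And>x. x \<in> space MX \<Longrightarrow> e True (\<pi>t x) + e False (\<pi>t x) = 1"
    and \<phi>_dens: "\<And>x z. x \<in> space MX \<Longrightarrow> z \<in> {0..1} \<Longrightarrow> 0 \<le> \<phi> z (\<pi>z x)"
    and \<phi>_int: "\<And>x. x \<in> space MX \<Longrightarrow>
        (\<integral>\<^sup>+ z. ennreal (\<phi> z (\<pi>z x)) \<partial>(restrict_space lborel {0..1})) = 1"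
    and factorized: "\<And>x t z. x \<in> space MX \<Longrightarrow> z \<in> {0..1} \<Longrightarrow> 0 < marg_x MX f x
        \<Longrightarrow> post_tz MX f x (t, z) = \<phi> z (\<pi>z x) * e t (\<pi>t x)"
    and e\<eta>_meas: "(\<lambda>(x, t, z). e\<eta> t (\<pi>t x)) \<in> borel_measurable (MX \<Otimes>\<^sub>M TZ)"
    and \<phi>\<eta>_meas: "(\<lambda>(x, t, z). \<phi>\<eta> z (\<pi>z x)) \<in> borel_measurable (MX \<Otimes>\<^sub>M TZ)"
    and \<Gamma>t_ge: "1 \<le> \<Gamma>t" and \<Gamma>z_ge: "1 \<le> \<Gamma>z"
    and odds_t: "\<And>x t. x \<in> space MX \<Longrightarrow>
        inverse \<Gamma>t \<le> e\<eta> t (\<pi>t x) / e t (\<pi>t x) \<and> e\<eta> t (\<pi>t x) / e t (\<pi>t x) \<le> \<Gamma>t"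
    and odds_z: "\<And>x z. x \<in> space MX \<Longrightarrow> z \<in> {0..1} \<Longrightarrow>
        inverse \<Gamma>z \<le> \<phi>\<eta> z (\<pi>z x) / \<phi> z (\<pi>z x) \<and> \<phi>\<eta> z (\<pi>z x) / \<phi> z (\<pi>z x) \<le> \<Gamma>z"
    and \<Phi>_meas: "\<Phi> \<in> MX \<rightarrow>\<^sub>M MR"
    and \<Phi>_inv: "\<exists>\<Psi> \<in> MR \<rightarrow>\<^sub>M MX. \<forall>x \<in> space MX. \<Psi> (\<Phi> x) = x"
  defines "w \<equiv> (\<lambda>(t, z) x. 1 / (\<phi>\<eta> z (\<pi>z x) * e\<eta> t (\<pi>t x)))"
  shows "KL (P_meas MX f) (Q_meas MX f w) = KL (P_Phi MX MR \<Phi> f) (Q_Phi MX MR \<Phi> f w)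
      \<and> KL (P_Phi MX MR \<Phi> f) (Q_Phi MX MR \<Phi> f w) \<le> 2 * (ln \<Gamma>t + ln \<Gamma>z)
      \<and> tv_dist (P_Phi MX MR \<Phi> f) (Q_Phi MX MR \<Phi> f w) \<le> sqrt (ln \<Gamma>t + ln \<Gamma>z)"
proof -
  define c where "c = \<Gamma>t * \<Gamma>z"
  define T where "T = (\<lambda>(x, tz). (\<Phi> x, tz :: bool \<times> real))"
  let ?p = "\<lambda>z. marg_x MX f (fst z) * marg_tz MX f (snd z)"
  let ?q = "\<lambda>(x, tz). q_eta MX f w tz x * marg_tz MX f tz"
  have c: "1 \<le> c" unfolding c_def using \<Gamma>t_ge \<Gamma>z_ge by (metis mult_mono' mult_1 zero_le_one)
  have w_meas: "(\<lambda>(x, tz). w tz x) \<in> borel_measurable (MX \<Otimes>\<^sub>M TZ)"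
    and w_nonneg: "\<And>x tz. x \<in> space MX \<Longrightarrow> tz \<in> space TZ \<Longrightarrow> 0 \<le> w tz x"
    and w_ratio: "\<And>x tz. x \<in> space MX \<Longrightarrow> tz \<in> space TZ \<Longrightarrow> 0 < marg_x MX f x \<Longrightarrow>
      marg_x MX f x / c \<le> w tz x * f (x, tz) \<and> w tz x * f (x, tz) \<le> c * marg_x MX f x"
    using inverse_propensity_weight_bounds[where e = e and \<phi> = \<phi> and \<pi>t = \<pi>t and \<pi>z = \<pi>z,
        OF e_pmf \<phi>_dens factorized e\<eta>_meas \<phi>\<eta>_meas \<Gamma>t_ge \<Gamma>z_ge odds_t odds_z]
    unfolding w_def c_def by blast+
  have dens: "ratio_bounded_densities (MX \<Otimes>\<^sub>M TZ) (c^2) ?p ?q"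
    using sf f_meas f_nonneg f_prob w_meas w_nonneg c w_ratio by (rule ratio_bounded_densities_P_meas_Q_meas)
  have T: "T \<in> MX \<Otimes>\<^sub>M TZ \<rightarrow>\<^sub>M MR \<Otimes>\<^sub>M TZ" unfolding T_def using \<Phi>_meas by measurable
  have P: "P_meas MX f = density (MX \<Otimes>\<^sub>M TZ) ?p" by (rule P_meas_eq_density[OF sf f_meas])
  have Q: "Q_meas MX f w = density (MX \<Otimes>\<^sub>M TZ) ?q" by (simp add: Q_meas_def case_prod_beta')
  have P_Phi: "P_Phi MX MR \<Phi> f = distr (density (MX \<Otimes>\<^sub>M TZ) ?p) (MR \<Otimes>\<^sub>M TZ) T"
    using P_Phi_eq_distr_P_meas[OF sf f_meas \<Phi>_meas] by (simp add: P T_def)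
  have Q_Phi: "Q_Phi MX MR \<Phi> f w = distr (density (MX \<Otimes>\<^sub>M TZ) ?q) (MR \<Otimes>\<^sub>M TZ) T"
    unfolding Q_Phi_def Q T_def ..
  obtain \<Psi> where "\<Psi> \<in> MR \<rightarrow>\<^sub>M MX" "\<forall>x \<in> space MX. \<Psi> (\<Phi> x) = x" using \<Phi>_inv by blast
  then have "KL (P_Phi MX MR \<Phi> f) (Q_Phi MX MR \<Phi> f w) = KL (P_meas MX f) (Q_meas MX f w)"
    unfolding P_Phi Q_Phi P Q
    by (intro KL_distr_density_of_inverse[OF dens T, of "\<lambda>(r, tz). (\<Psi> r, tz)"])
      (auto simp: T_def space_pair_measure)
  moreover have "KL (P_meas MX f) (Q_meas MX f w) \<le> ln (c^2)"
    using dens c unfolding P Q ratio_bounded_densities_def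
    by (intro KL_density_le_ln) (auto simp: one_le_power elim: eventually_mono)
  moreover have "tv_dist (P_Phi MX MR \<Phi> f) (Q_Phi MX MR \<Phi> f w) \<le> (c^2 - 1) / (c^2 + 1)"
    unfolding P_Phi Q_Phi using c by (intro tv_dist_distr_density_le[OF dens _ T]) (simp add: one_le_power)
  moreover have "ln c = ln \<Gamma>t + ln \<Gamma>z" using \<Gamma>t_ge \<Gamma>z_ge by (simp add: c_def ln_mult)
  ultimately show ?thesis
    using sq_minus_one_div_sq_plus_one_le_sqrt_ln[OF c] c by (simp add: ln_realpow)
qed

end
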